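(* Let $q$ be a prime power, $u,v$ non-zero in $\mathbb{F}_q$, and write $\mathrm{Rad}(q-1)=k\,p_1\cdots p_s$ with $k$ a divisor and $p_1,\ldots,p_s$ distinct primes. Let $\theta=\theta(k)$, $W=W(k)$, and let $\varepsilon$ be the number of zeros of $ux^2+v$ in $\mathbb{F}_q$. Then for each $i=1,\ldots,s$: (i) $|M_{p_ik,k}-\theta(p_i)M_{k,k}|\leq \theta^2\left(1-\frac{1}{p_i}\right)\{2\sqrt{q}(W^2-W)+\varepsilon W\}$; (ii) $|M_{k,p_ik}-\theta(p_i)M_{k,k}|\leq 2\left(1-\frac{1}{p_i}\right)\theta^2W^2\sqrt{q}$.
   Context: $\mathrm{Rad}(m)$ is the product of the distinct primes dividing $m$; $\theta(m)=\phi(m)/m$; $W(m)=2^{\omega(m)}$ with $\omega(m)$ the number of distinct prime divisors. For a divisor $e$ of $q-1$, a non-zero $a\in\mathbb{F}_q$ is $e$-free if $a=b^d$ with $b\in\mathbb{F}_q$, $d\mid e$ implies $d=1$. For divisors $e_1,e_2$ of $q-1$, $M_{e_1,e_2}$ is the number of non-zero $a\in\mathbb{F}_q$ such that $a$ is $e_1$-free and $ua+va^{-1}$ is (non-zero and) $e_2$-free. *)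

theory Defs
  imports "HOL-Computational_Algebra.Computational_Algebra" "HOL-Number_Theory.Number_Theory"
begin

definition Rad :: "nat \<Rightarrow> nat" where
  "Rad m = (\<Prod>p\<in>prime_factors m. p)"

definition theta :: "nat \<Rightarrow> real" where
  "theta m = real (totient m) / real m"

definition W :: "nat \<Rightarrow> nat" where
  "W m = 2 ^ card (prime_factors m)"

definition efree :: "nat \<Rightarrow> 'a::field \<Rightarrow> bool" where
  "efree e a \<longleftrightarrow> a \<noteq> 0 \<and> (\<forall>d b. d dvd e \<and> a = b ^ d \<longrightarrow> d = 1)"

definition Mcount :: "'a::{finite,field} \<Rightarrow> 'a \<Rightarrow> nat \<Rightarrow> nat \<Rightarrow> nat" where
  "Mcount u v e1 e2 = card {a::'a. a \<noteq> 0 \<and> efree e1 a \<and>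
      u * a + v * inverse a \<noteq> 0 \<and> efree e2 (u * a + v * inverse a)}"

end

(*
  Write q = |F|, B(a) = u a + v/a and, for a prime p dividing q - 1, let psi be a character of
  order p. An element is pk-free iff it is k-free and not a p-th power, and averaging the p
  powers of psi detects p-th powers; hence each difference M - theta(p) M in the statement
  equals -1/p times a sum over t = 1..p-1 of the count twisted by psi^t on a, resp. on B(a).
  Vinogradov's formula writes the indicator of k-free elements as theta(k) times the principal
  character plus nontrivial characters of order dividing k with coefficients of total size
  theta(k)(W(k) - 1). The twisted counts thus become combinations of sums
  S = sum_a alpha(a) beta(B(a)) in which one character carries psi^t and is nontrivial.
  If beta is nontrivial then |S| <= 2 sqrt q: |S| is constant on u times the nonzero squares,
  a set of at least (q-1)/2 elements, and Parseval over u bounds the mean square of S by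
  2 q (q - 1). If beta is principal, S equals minus the sum of alpha over the zeros of
  u x^2 + v.
*)

theory Submission
  imports Defs "HOL-Algebra.Multiplicative_Group" "HOL-Analysis.Complex_Transcendental"
begin

section \<open>Discrete logarithms in a finite field\<close>

lemma two_le_card_field: "2 \<le> CARD('a::{finite,field})"
proof -
  have "card {0::'a, 1} \<le> CARD('a)" by (rule card_mono) auto
  thus ?thesis by simp
qed

text \<open>A copy of ring_of_type_algebra from HOL-Algebra.Algebraic_Closure_Type, whose import
  shadows the constant prime.\<close>

definition ring_of_field :: "'a::field ring" where
  "ring_of_field = \<lparr>carrier = UNIV, mult = (*), one = 1, zero = 0, add = (+)\<rparr>"

lemma field_ring_of_field: "field (ring_of_field :: 'a::field ring)"
proof -
  have "\<exists>y. x + y = 0" for x :: 'a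
    using add.right_inverse by blast
  moreover have "x \<noteq> 0 \<Longrightarrow> \<exists>y. x * y = 1" for x :: 'a
    by (rule exI[of _ "inverse x"]) auto
  ultimately show ?thesis
    unfolding ring_of_field_def using add.right_inverse
    by unfold_locales (auto simp: algebra_simps Units_def)
qed

lemma power_ring_of_field: "x [^]\<^bsub>ring_of_field\<^esub> (n::nat) = (x::'a::field) ^ n"
  by (induct n) (simp_all add: ring_of_field_def nat_pow_def mult.commute)

lemma exists_primitive_element:
  "\<exists>g::'a::{finite,field}. g \<noteq> 0 \<and> (\<forall>x. x \<noteq> 0 \<longrightarrow> (\<exists>i. x = g ^ i))"
proof -
  have "finite (carrier (ring_of_field :: 'a ring))"
    by (simp add: ring_of_field_def)
  then obtain g where
    "g \<in> carrier (mult_of (ring_of_field :: 'a ring))"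
    "carrier (mult_of (ring_of_field :: 'a ring)) =
       {g [^]\<^bsub>ring_of_field\<^esub> i | i::nat. i \<in> UNIV}"
    using field.finite_field_mult_group_has_gen[OF field_ring_of_field] by blast
  hence "g \<noteq> 0" "UNIV - {0} = {g ^ i | i::nat. True}"
    unfolding power_ring_of_field by (auto simp: ring_of_field_def)
  thus ?thesis by blast
qed

lemma power_card_minus_one:
  assumes "x \<noteq> (0::'a::{finite,field})"
  shows "x ^ (CARD('a) - 1) = 1"
proof -
  let ?U = "UNIV - {0::'a}"
  have "(\<Prod>y\<in>?U. x * y) = (\<Prod>y\<in>?U. y)"
    by (rule prod.reindex_bij_witness[where i="\<lambda>y. inverse x * y" and j="\<lambda>y. x * y"])
       (use assms in auto)
  moreover have "(\<Prod>y\<in>?U. x * y) = x ^ (CARD('a) - 1) * (\<Prod>y\<in>?U. y)"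
    by (simp add: prod.distrib card_Diff_singleton)
  moreover have "(\<Prod>y\<in>?U. y) \<noteq> 0" by simp
  ultimately show ?thesis by simp
qed

definition primitive_element :: "'a::{finite,field}" where
  "primitive_element = (SOME g. g \<noteq> 0 \<and> (\<forall>x. x \<noteq> 0 \<longrightarrow> (\<exists>i. x = g ^ i)))"

lemma primitive_element:
  "(primitive_element :: 'a::{finite,field}) \<noteq> 0 \<and>
     (\<forall>x::'a. x \<noteq> 0 \<longrightarrow> (\<exists>i. x = primitive_element ^ i))"
  unfolding primitive_element_def by (rule someI_ex[OF exists_primitive_element])

lemma primitive_element_nonzero: "(primitive_element :: 'a::{finite,field}) \<noteq> 0"
  using primitive_element by blast

lemma nonzero_eq_primitive_element_power:
  "(x::'a::{finite,field}) \<noteq> 0 \<Longrightarrow> \<exists>i. x = primitive_element ^ i"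
  using primitive_element by blast

lemma primitive_element_power_mod:
  "(primitive_element :: 'a::{finite,field}) ^ i = primitive_element ^ (i mod (CARD('a) - 1))"
proof -
  let ?n = "CARD('a) - 1" and ?g = "primitive_element :: 'a"
  have "?g ^ i = (?g ^ ?n) ^ (i div ?n) * ?g ^ (i mod ?n)"
    by (subst (1) mult_div_mod_eq[symmetric, of i ?n]) (simp only: power_add power_mult)
  also have "?g ^ ?n = 1" by (rule power_card_minus_one[OF primitive_element_nonzero])
  finally show ?thesis by simp
qed

lemma primitive_element_powers:
  "(\<lambda>i. (primitive_element :: 'a::{finite,field}) ^ i) ` {..<CARD('a) - 1} = UNIV - {0}"
proof (intro equalityI subsetI)
  fix x :: 'a assume "x \<in> UNIV - {0}"
  then obtain i where "x = primitive_element ^ i" using nonzero_eq_primitive_element_power by auto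
  hence "x = primitive_element ^ (i mod (CARD('a) - 1))"
    unfolding primitive_element_power_mod[of i] .
  moreover have "i mod (CARD('a) - 1) \<in> {..<CARD('a) - 1}"
    using two_le_card_field[where 'a='a] by simp
  ultimately show "x \<in> (\<lambda>i. primitive_element ^ i) ` {..<CARD('a) - 1}" by (rule image_eqI)
qed (use primitive_element_nonzero in auto)

lemma primitive_element_power_eq_iff:
  "(primitive_element :: 'a::{finite,field}) ^ a = primitive_element ^ b \<longleftrightarrow>
     [a = b] (mod CARD('a) - 1)"
proof -
  let ?n = "CARD('a) - 1"
  have "card ((\<lambda>i. (primitive_element :: 'a) ^ i) ` {..<?n}) = card {..<?n}"
    unfolding primitive_element_powers by (simp add: card_Diff_singleton)
  hence inj: "inj_on (\<lambda>i. (primitive_element :: 'a) ^ i) {..<?n}"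
    using eq_card_imp_inj_on finite_lessThan by blast
  have "a mod ?n \<in> {..<?n}" "b mod ?n \<in> {..<?n}" using two_le_card_field[where 'a='a] by simp_all
  with inj show ?thesis
    unfolding primitive_element_power_mod[of a] primitive_element_power_mod[of b] cong_def
    by (simp add: inj_on_eq_iff)
qed

definition dlog :: "'a::{finite,field} \<Rightarrow> nat" where
  "dlog x = (SOME i. x = primitive_element ^ i)"

lemma primitive_element_power_dlog:
  assumes "(x::'a::{finite,field}) \<noteq> 0"
  shows "primitive_element ^ dlog x = x"
  unfolding dlog_def
  by (rule someI_ex[of "\<lambda>i. x = primitive_element ^ i", THEN sym])
     (rule nonzero_eq_primitive_element_power[OF assms])

lemma dlog_mult:
  assumes "(x::'a::{finite,field}) \<noteq> 0" "y \<noteq> 0"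
  shows "[dlog (x * y) = dlog x + dlog y] (mod CARD('a) - 1)"
proof -
  have "primitive_element ^ dlog (x * y) = (primitive_element :: 'a) ^ (dlog x + dlog y)"
    using assms by (simp add: power_add primitive_element_power_dlog)
  thus ?thesis by (simp only: primitive_element_power_eq_iff)
qed

lemma dlog_primitive_element: "[dlog (primitive_element :: 'a::{finite,field}) = 1] (mod CARD('a) - 1)"
proof -
  have "primitive_element ^ dlog (primitive_element :: 'a) = (primitive_element :: 'a) ^ 1"
    by (simp add: primitive_element_nonzero primitive_element_power_dlog)
  thus ?thesis by (simp only: primitive_element_power_eq_iff)
qed

lemma is_power_iff_dvd_dlog:
  assumes "r dvd CARD('a) - 1" "(x::'a::{finite,field}) \<noteq> 0"
  shows "(\<exists>b. x = b ^ r) \<longleftrightarrow> r dvd dlog x"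
proof
  assume "\<exists>b. x = b ^ r"
  then obtain b where b: "x = b ^ r" by blast
  have "r \<noteq> 0" using assms(1) two_le_card_field[where 'a='a] by (cases "r = 0") simp_all
  hence "b \<noteq> 0" using b assms(2) by auto
  have "primitive_element ^ dlog x = (primitive_element :: 'a) ^ (dlog b * r)"
    using b \<open>b \<noteq> 0\<close> assms(2) by (simp add: power_mult primitive_element_power_dlog)
  hence "[dlog x = dlog b * r] (mod r)"
    using assms(1) by (simp only: primitive_element_power_eq_iff cong_dvd_modulus_nat)
  thus "r dvd dlog x" by (simp add: cong_def mod_eq_0_iff_dvd)
next
  assume "r dvd dlog x"
  then obtain m where "dlog x = r * m" by blast
  hence "x = (primitive_element ^ m) ^ r"
    using primitive_element_power_dlog[OF assms(2)] by (metis power_mult mult.commute)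
  thus "\<exists>b. x = b ^ r" by blast
qed

section \<open>Multiplicative characters\<close>

definition mult_char :: "('a::field \<Rightarrow> complex) \<Rightarrow> bool" where
  "mult_char \<phi> \<longleftrightarrow> \<phi> 0 = 0 \<and> (\<forall>x y. \<phi> (x * y) = \<phi> x * \<phi> y) \<and> (\<forall>x. x \<noteq> 0 \<longrightarrow> \<phi> x \<noteq> 0)"

definition nontrivial_char :: "('a::field \<Rightarrow> complex) \<Rightarrow> bool" where
  "nontrivial_char \<phi> \<longleftrightarrow> (\<exists>y. y \<noteq> 0 \<and> \<phi> y \<noteq> 1)"

definition principal_char :: "'a::field \<Rightarrow> complex" where
  "principal_char x = (if x = 0 then 0 else 1)"

definition char_of_order_dvd :: "nat \<Rightarrow> ('a::field \<Rightarrow> complex) \<Rightarrow> bool" where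
  "char_of_order_dvd k \<phi> \<longleftrightarrow> mult_char \<phi> \<and> (\<forall>x. x \<noteq> 0 \<longrightarrow> \<phi> x ^ k = 1)"

lemma mult_charD:
  assumes "mult_char \<phi>"
  shows "\<phi> 0 = 0" "\<phi> (x * y) = \<phi> x * \<phi> y" "x \<noteq> 0 \<Longrightarrow> \<phi> x \<noteq> 0"
  using assms unfolding mult_char_def by auto

lemma mult_char_one:
  assumes "mult_char \<phi>"
  shows "\<phi> 1 = 1"
proof -
  have "\<phi> 1 * \<phi> 1 = \<phi> 1 * 1" using mult_charD(2)[OF assms, of 1 1] by simp
  thus ?thesis using mult_charD(3)[OF assms, of 1] by auto
qed

lemma mult_char_power: "mult_char \<phi> \<Longrightarrow> \<phi> (x ^ m) = \<phi> x ^ m"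
  by (induct m) (simp_all add: mult_char_one mult_charD(2))

lemma mult_char_times: "mult_char \<phi> \<Longrightarrow> mult_char \<psi> \<Longrightarrow> mult_char (\<lambda>x. \<phi> x * \<psi> x)"
  unfolding mult_char_def by (simp add: algebra_simps)

lemma mult_char_power_fun: "mult_char \<phi> \<Longrightarrow> 0 < t \<Longrightarrow> mult_char (\<lambda>x. \<phi> x ^ t)"
  unfolding mult_char_def by (simp add: power_mult_distrib)

lemma mult_char_principal_char: "mult_char principal_char"
  unfolding mult_char_def principal_char_def by auto

lemma norm_mult_char:
  assumes "mult_char \<phi>" "(x::'a::{finite,field}) \<noteq> 0"
  shows "norm (\<phi> x) = 1"
proof -
  have "\<phi> x ^ (CARD('a) - 1) = \<phi> (x ^ (CARD('a) - 1))"
    by (rule mult_char_power[OF assms(1), symmetric])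
  also have "\<dots> = 1" by (simp only: power_card_minus_one[OF assms(2)] mult_char_one[OF assms(1)])
  finally have "\<phi> x ^ (CARD('a) - 1) = 1" .
  hence "norm (\<phi> x) ^ (CARD('a) - 1) = 1" by (metis norm_power norm_one)
  moreover have "CARD('a) - 1 \<noteq> 0" using two_le_card_field[where 'a='a] by simp
  ultimately show ?thesis by (metis abs_norm_cancel power_eq_1_iff real_norm_def)
qed

lemma norm_mult_char_le: "mult_char \<phi> \<Longrightarrow> norm (\<phi> (x::'a::{finite,field})) \<le> 1"
  by (cases "x = 0") (simp_all add: mult_charD(1) norm_mult_char)

lemma mult_char_times_cnj: "mult_char \<phi> \<Longrightarrow> \<phi> z * cnj (\<phi> (z::'a::{finite,field})) = principal_char z"
  by (cases "z = 0")
     (simp_all add: mult_charD(1) principal_char_def complex_norm_square[symmetric] norm_mult_char)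

lemma mult_char_inverse:
  assumes "mult_char \<phi>"
  shows "\<phi> (inverse x) = cnj (\<phi> (x::'a::{finite,field}))"
proof (cases "x = 0")
  case False
  have "\<phi> (inverse x) * \<phi> x = 1"
    using False by (simp flip: mult_charD(2)[OF assms] add: mult_char_one[OF assms])
  moreover have "cnj (\<phi> x) * \<phi> x = 1"
    using mult_char_times_cnj[OF assms, of x] False by (simp add: principal_char_def mult.commute)
  ultimately show ?thesis using mult_charD(3)[OF assms False] by (metis mult_cancel_right)
qed (simp add: mult_charD(1)[OF assms])

lemma sum_nontrivial_char:
  assumes "mult_char \<phi>" "nontrivial_char \<phi>"
  shows "(\<Sum>x\<in>(UNIV::'a::{finite,field} set). \<phi> x) = 0"
proof -
  obtain y :: 'a where y: "y \<noteq> 0" "\<phi> y \<noteq> 1" using assms(2) unfolding nontrivial_char_def by blast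
  have "(\<Sum>x\<in>UNIV. \<phi> x) = (\<Sum>x\<in>UNIV. \<phi> (y * x))"
    by (rule sum.reindex_bij_witness[where j="\<lambda>x. inverse y * x" and i="\<lambda>x. y * x"])
       (use y in \<open>auto simp: field_simps\<close>)
  also have "\<dots> = \<phi> y * (\<Sum>x\<in>UNIV. \<phi> x)"
    by (simp add: mult_charD(2)[OF assms(1)] sum_distrib_left)
  finally have "(\<phi> y - 1) * (\<Sum>x\<in>UNIV. \<phi> x) = 0" by (simp add: algebra_simps)
  thus ?thesis using y(2) by simp
qed

lemma sum_principal_char: "(\<Sum>z\<in>(UNIV::'a::{finite,field} set). principal_char z) = of_nat (CARD('a) - 1)"
proof -
  have "(\<Sum>z\<in>(UNIV::'a set). principal_char z) = (\<Sum>z\<in>UNIV - {0::'a}. 1)"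
    by (rule sum.mono_neutral_cong_right) (auto simp: principal_char_def)
  thus ?thesis by (simp add: card_Diff_singleton)
qed

lemma root_of_unity_coprime_orders:
  fixes z :: complex
  assumes "z ^ a = 1" "z ^ b = 1" "coprime a b" "a \<noteq> 0"
  shows "z = 1"
proof -
  obtain x y where "a * x = b * y + gcd a b" using bezout_nat[OF assms(4)] by blast
  hence "a * x = b * y + 1" using assms(3) by simp
  hence "z ^ (a * x) = z ^ (b * y) * z" by (simp add: power_add)
  thus ?thesis using assms(1,2) by (simp add: power_mult)
qed

lemma coprime_mult_below_prime:
  fixes r m t :: nat
  assumes "prime r" "\<not> r dvd m" "0 < t" "t < r"
  shows "coprime (t * m) r"
proof -
  have "\<not> r dvd t" using nat_dvd_not_less[OF assms(3,4)] .
  hence "\<not> r dvd t * m" using assms(1,2) by (simp add: prime_dvd_mult_iff)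
  thus ?thesis using assms(1) prime_imp_coprime coprime_commute by blast
qed

lemma char_of_order_dvd_principal_char: "char_of_order_dvd k principal_char"
  by (simp add: char_of_order_dvd_def mult_char_principal_char principal_char_def)

lemma nontrivial_char_twist:
  assumes "char_of_order_dvd k \<phi>" "char_of_order_dvd r \<psi>" "nontrivial_char \<psi>"
    and "coprime (t * k) r" "0 < t" "0 < k"
  shows "nontrivial_char (\<lambda>x. \<phi> x * \<psi> x ^ t)"
proof (rule ccontr)
  assume "\<not> nontrivial_char (\<lambda>x. \<phi> x * \<psi> x ^ t)"
  hence triv: "\<forall>x. x \<noteq> 0 \<longrightarrow> \<phi> x * \<psi> x ^ t = 1" unfolding nontrivial_char_def by blast
  obtain y where y: "y \<noteq> 0" "\<psi> y \<noteq> 1" using assms(3) unfolding nontrivial_char_def by blast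
  have "(\<phi> y * \<psi> y ^ t) ^ k = 1" using triv y by simp
  hence "\<phi> y ^ k * \<psi> y ^ (t * k) = 1" by (simp add: power_mult_distrib power_mult)
  hence "\<psi> y ^ (t * k) = 1" using assms(1) y unfolding char_of_order_dvd_def by simp
  hence "\<psi> y = 1"
    using root_of_unity_coprime_orders[OF _ _ assms(4)] assms(2,5,6) y
    unfolding char_of_order_dvd_def by simp
  thus False using y by simp
qed

definition unit_root :: "nat \<Rightarrow> complex" where
  "unit_root r = exp (2 * pi * \<i> / r)"

lemma unit_root_power_eq_1_iff: "0 < r \<Longrightarrow> unit_root r ^ j = 1 \<longleftrightarrow> r dvd j"
  using complex_root_unity_eq_1[of r j]
  by (simp add: unit_root_def exp_of_nat_mult[symmetric] mult.commute)

lemma power_mod_of_power_eq_1: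
  fixes z :: "'a::monoid_mult"
  assumes "z ^ r = 1"
  shows "z ^ a = z ^ (a mod r)"
proof -
  have "z ^ a = (z ^ r) ^ (a div r) * z ^ (a mod r)"
    by (subst (1) mult_div_mod_eq[symmetric, of a r]) (simp only: power_add power_mult)
  thus ?thesis using assms by simp
qed

definition power_residue_char :: "nat \<Rightarrow> 'a::{finite,field} \<Rightarrow> complex" where
  "power_residue_char r x = (if x = 0 then 0 else unit_root r ^ dlog x)"

lemma power_residue_char_eq_1_iff:
  assumes "x \<noteq> 0" "0 < r"
  shows "power_residue_char r x ^ t = 1 \<longleftrightarrow> r dvd dlog x * t"
  using assms by (simp add: power_residue_char_def power_mult[symmetric] unit_root_power_eq_1_iff)

lemma mult_char_power_residue_char:
  assumes "r dvd CARD('a::{finite,field}) - 1" "0 < r"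
  shows "mult_char (power_residue_char r :: 'a \<Rightarrow> complex)"
  unfolding mult_char_def
proof (intro conjI allI impI)
  fix x y :: 'a
  have root: "unit_root r ^ r = 1" using assms(2) by (simp add: unit_root_power_eq_1_iff)
  show "power_residue_char r (x * y) = power_residue_char r x * power_residue_char r y"
  proof (cases "x = 0 \<or> y = 0")
    case False
    hence "[dlog (x * y) = dlog x + dlog y] (mod r)"
      using assms(1) by (auto intro: dlog_mult cong_dvd_modulus_nat)
    hence "unit_root r ^ dlog (x * y) = unit_root r ^ (dlog x + dlog y)"
      unfolding cong_def
      by (simp only: power_mod_of_power_eq_1[OF root, of "dlog (x * y)"]
          power_mod_of_power_eq_1[OF root, of "dlog x + dlog y"])
    thus ?thesis using False by (simp add: power_residue_char_def power_add)
  qed (auto simp: power_residue_char_def)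
qed (simp_all add: power_residue_char_def unit_root_def)

lemma char_of_order_dvd_power_residue_char:
  assumes "r dvd CARD('a::{finite,field}) - 1" "0 < r"
  shows "char_of_order_dvd r (power_residue_char r :: 'a \<Rightarrow> complex)"
  using mult_char_power_residue_char[OF assms] assms(2)
  unfolding char_of_order_dvd_def by (simp add: power_residue_char_eq_1_iff)

lemma sum_power_residue_char_powers:
  assumes "r dvd CARD('a::{finite,field}) - 1" "0 < r" "(x::'a) \<noteq> 0"
  shows "(\<Sum>t<r. power_residue_char r x ^ t) = (if \<exists>b. x = b ^ r then of_nat r else 0)"
proof (cases "r dvd dlog x")
  case True
  hence "power_residue_char r x = 1"
    using power_residue_char_eq_1_iff[OF assms(3,2), of 1] by simp
  thus ?thesis using is_power_iff_dvd_dlog[OF assms(1,3)] True by simp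
next
  case False
  hence "power_residue_char r x \<noteq> 1"
    using power_residue_char_eq_1_iff[OF assms(3,2), of 1] by simp
  moreover have "power_residue_char r x ^ r = 1"
    using power_residue_char_eq_1_iff[OF assms(3,2), of r] by simp
  ultimately have "(\<Sum>t<r. power_residue_char r x ^ t) = 0"
    by (simp add: sum_gp_strict)
  thus ?thesis using is_power_iff_dvd_dlog[OF assms(1,3)] False by simp
qed

lemma nontrivial_power_residue_char:
  assumes "r dvd CARD('a::{finite,field}) - 1" "prime r"
  shows "nontrivial_char (power_residue_char r :: 'a \<Rightarrow> complex)"
proof -
  have r: "1 < r" using assms(2) prime_gt_1_nat by blast
  have "[dlog (primitive_element :: 'a) = 1] (mod r)"
    using dlog_primitive_element assms(1) by (rule cong_dvd_modulus_nat)
  hence "\<not> r dvd dlog (primitive_element :: 'a)" using r by (simp add: cong_def dvd_eq_mod_eq_0)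
  hence "power_residue_char r (primitive_element :: 'a) \<noteq> 1"
    using power_residue_char_eq_1_iff[OF primitive_element_nonzero[where 'a='a], of r 1] r by simp
  thus ?thesis unfolding nontrivial_char_def using primitive_element_nonzero by blast
qed

section \<open>Mixed character sums\<close>

definition char_sum :: "('a::field \<Rightarrow> complex) \<Rightarrow> ('a \<Rightarrow> complex) \<Rightarrow> 'a \<Rightarrow> 'a \<Rightarrow> complex"
  where "char_sum \<alpha> \<beta> u v = (\<Sum>a\<in>UNIV. \<alpha> a * \<beta> (u * a + v * inverse a))"

lemma sum_char_times_cnj_affine:
  fixes c e :: "'a::{finite,field}"
  assumes \<beta>: "mult_char \<beta>" "nontrivial_char \<beta>"
  shows "(\<Sum>z\<in>UNIV. \<beta> z * cnj (\<beta> (c * z + e)))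
       = (if e = 0 then of_nat CARD('a) - 1 else - 1) * cnj (\<beta> c)"
proof (cases "e = 0")
  case True
  hence "(\<Sum>z\<in>UNIV. \<beta> z * cnj (\<beta> (c * z + e))) = (\<Sum>z\<in>(UNIV::'a set). principal_char z * cnj (\<beta> c))"
    using \<beta>(1) by (simp add: mult_charD(2) mult_char_times_cnj[symmetric] mult_ac)
  thus ?thesis
    using True two_le_card_field[where 'a='a]
    by (simp add: sum_distrib_right[symmetric] sum_principal_char of_nat_diff)
next
  case False
  txt \<open>Substituting w = e/z turns the sum into a translate of the full character sum.\<close>
  have "\<beta> z * cnj (\<beta> (c * z + e)) = (if e * inverse z = 0 then 0 else cnj (\<beta> (c + e * inverse z)))"
    for z
  proof (cases "z = 0")
    case False
    have "c * z + e = z * (c + e * inverse z)" using False by (simp add: field_simps)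
    hence "\<beta> z * cnj (\<beta> (c * z + e)) = (\<beta> z * cnj (\<beta> z)) * cnj (\<beta> (c + e * inverse z))"
      using \<beta>(1) by (simp add: mult_charD(2) mult_ac)
    thus ?thesis using mult_char_times_cnj[OF \<beta>(1), of z] False \<open>e \<noteq> 0\<close>
      by (simp add: principal_char_def)
  qed (simp add: mult_charD(1)[OF \<beta>(1)])
  hence "(\<Sum>z\<in>UNIV. \<beta> z * cnj (\<beta> (c * z + e)))
      = (\<Sum>z\<in>UNIV. if e * inverse z = 0 then 0 else cnj (\<beta> (c + e * inverse z)))" by simp
  also have "\<dots> = (\<Sum>w\<in>UNIV. if w = 0 then 0 else cnj (\<beta> (c + w)))"
    by (rule sum.reindex_bij_witness[where j="\<lambda>z. e * inverse z" and i="\<lambda>w. e * inverse w"])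
       (use \<open>e \<noteq> 0\<close> in \<open>auto simp: field_simps\<close>)
  also have "\<dots> = (\<Sum>w\<in>UNIV. cnj (\<beta> (c + w))) - cnj (\<beta> c)"
    by (simp add: sum.If_cases Compl_eq_Diff_UNIV sum_diff1)
  also have "(\<Sum>w\<in>UNIV. cnj (\<beta> (c + w))) = cnj (\<Sum>s\<in>UNIV. \<beta> s)"
    unfolding cnj_sum
    by (rule sum.reindex_bij_witness[where j="\<lambda>w. c + w" and i="\<lambda>s. s - c"]) auto
  finally show ?thesis using False sum_nontrivial_char[OF \<beta>] by simp
qed

text \<open>With z = u a + v/a one has u b + v/b = (b/a) z + e, where e = 0 iff a^2 = b^2.\<close>

lemma char_correlation_sum:
  fixes a b v :: "'a::{finite,field}"
  assumes \<beta>: "mult_char \<beta>" "nontrivial_char \<beta>" and "a \<noteq> 0" "b \<noteq> 0" "v \<noteq> 0"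
  shows "(\<Sum>u\<in>UNIV. \<beta> (u * a + v * inverse a) * cnj (\<beta> (u * b + v * inverse b)))
       = ((if b\<^sup>2 = a\<^sup>2 then of_nat CARD('a) else 0) - 1) * \<beta> a * cnj (\<beta> b)"
proof -
  define c where "c = b * inverse a"
  define e where "e = v * inverse b - v * b * inverse (a\<^sup>2)"
  have "e = 0 \<longleftrightarrow> b\<^sup>2 = a\<^sup>2"
    using assms unfolding e_def by (auto simp: field_simps power2_eq_square)
  moreover have "cnj (\<beta> c) = \<beta> a * cnj (\<beta> b)"
    using \<beta>(1) by (simp add: c_def mult_charD(2) mult_char_inverse mult.commute)
  moreover have "(\<Sum>u\<in>UNIV. \<beta> (u * a + v * inverse a) * cnj (\<beta> (u * b + v * inverse b)))
      = (\<Sum>z\<in>UNIV. \<beta> z * cnj (\<beta> (c * z + e)))"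
  proof (rule sum.reindex_bij_witness[where j="\<lambda>u. u * a + v * inverse a"
        and i="\<lambda>z. (z - v * inverse a) * inverse a"])
    fix u :: 'a
    have "c * (u * a + v * inverse a) + e = u * b + v * inverse b"
      using assms unfolding c_def e_def by (simp add: field_simps power2_eq_square)
    thus "\<beta> (u * a + v * inverse a) * cnj (\<beta> (c * (u * a + v * inverse a) + e)) =
          \<beta> (u * a + v * inverse a) * cnj (\<beta> (u * b + v * inverse b))" by simp
  qed (use assms in \<open>auto simp: field_simps\<close>)
  ultimately show ?thesis using sum_char_times_cnj_affine[OF \<beta>, of c e] by (simp add: mult_ac)
qed

lemma card_square_roots_le: "card {b::'a::field. b\<^sup>2 = a\<^sup>2} \<le> 2"
proof -
  have "card {b::'a. b\<^sup>2 = a\<^sup>2} \<le> card {a, -a}"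
    by (rule card_mono) (auto simp: power2_eq_iff)
  also have "\<dots> \<le> 2" by (simp add: card_insert_le_m1)
  finally show ?thesis .
qed

lemma norm_sum_equal_squares_le:
  assumes "mult_char \<gamma>"
  shows "norm (\<Sum>a\<in>UNIV. \<Sum>b\<in>UNIV. if b\<^sup>2 = a\<^sup>2 then \<gamma> a * cnj (\<gamma> (b::'a::{finite,field})) else 0)
         \<le> 2 * (real CARD('a) - 1)"
proof -
  have "norm (\<Sum>b\<in>UNIV. if b\<^sup>2 = a\<^sup>2 then \<gamma> a * cnj (\<gamma> (b::'a)) else 0) \<le> 2 * Re (principal_char a)"
    for a :: 'a
  proof -
    have "norm (\<gamma> a * cnj (\<gamma> b)) \<le> Re (principal_char a)" for b
      using norm_mult_char[OF assms] norm_mult_char_le[OF assms, of b] mult_charD(1)[OF assms]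
      by (cases "a = 0") (simp_all add: principal_char_def norm_mult)
    hence "norm (\<Sum>b\<in>UNIV. if b\<^sup>2 = a\<^sup>2 then \<gamma> a * cnj (\<gamma> (b::'a)) else 0)
        \<le> (\<Sum>b\<in>UNIV. if b\<^sup>2 = a\<^sup>2 then Re (principal_char a) else 0)"
      by (intro order.trans[OF norm_sum sum_mono]) simp
    also have "\<dots> = real (card {b. b\<^sup>2 = a\<^sup>2}) * Re (principal_char a)"
      by (simp add: sum.If_cases)
    also have "\<dots> \<le> 2 * Re (principal_char a)"
      using card_square_roots_le[of a] by (intro mult_right_mono) (auto simp: principal_char_def)
    finally show ?thesis .
  qed
  hence "norm (\<Sum>a\<in>UNIV. \<Sum>b\<in>UNIV. if b\<^sup>2 = a\<^sup>2 then \<gamma> a * cnj (\<gamma> (b::'a)) else 0)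
      \<le> (\<Sum>a\<in>UNIV. 2 * Re (principal_char (a::'a)))"
    by (intro order.trans[OF norm_sum sum_mono])
  also have "\<dots> = 2 * (real CARD('a) - 1)"
    using two_le_card_field[where 'a='a]
    by (simp add: sum_distrib_left[symmetric] Re_sum[symmetric] sum_principal_char of_nat_diff)
  finally show ?thesis .
qed

text \<open>Parseval over u: expanding the square reduces it to the correlation sums above.\<close>

lemma sum_norm_char_sum_squared_eq:
  fixes v :: "'a::{finite,field}"
  assumes \<alpha>: "mult_char \<alpha>" and \<beta>: "mult_char \<beta>" "nontrivial_char \<beta>" and "v \<noteq> 0"
  defines "\<gamma> \<equiv> \<lambda>x. \<alpha> x * \<beta> x"
  shows "complex_of_real (\<Sum>u\<in>UNIV. (norm (char_sum \<alpha> \<beta> u v))\<^sup>2)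
       = of_nat CARD('a) * (\<Sum>a\<in>UNIV. \<Sum>b\<in>UNIV. if b\<^sup>2 = a\<^sup>2 then \<gamma> a * cnj (\<gamma> b) else 0)
         - (\<Sum>a\<in>UNIV. \<gamma> a) * cnj (\<Sum>a\<in>UNIV. \<gamma> a)"
proof -
  have expand: "\<alpha> a * cnj (\<alpha> b) * (\<Sum>u\<in>UNIV. \<beta> (u * a + v * inverse a) * cnj (\<beta> (u * b + v * inverse b)))
     = of_nat CARD('a) * (if b\<^sup>2 = a\<^sup>2 then \<gamma> a * cnj (\<gamma> b) else 0) - \<gamma> a * cnj (\<gamma> b)" for a b
  proof (cases "a = 0 \<or> b = 0")
    case False
    hence corr: "(\<Sum>u\<in>UNIV. \<beta> (u * a + v * inverse a) * cnj (\<beta> (u * b + v * inverse b)))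
        = ((if b\<^sup>2 = a\<^sup>2 then of_nat CARD('a) else 0) - 1) * \<beta> a * cnj (\<beta> b)"
      by (intro char_correlation_sum[OF \<beta> _ _ assms(4)]) auto
    show ?thesis unfolding corr \<gamma>_def by (cases "b\<^sup>2 = a\<^sup>2") (simp_all add: algebra_simps)
  qed (auto simp: \<gamma>_def mult_charD(1)[OF \<alpha>] mult_charD(1)[OF \<beta>(1)])
  have "complex_of_real (\<Sum>u\<in>UNIV. (norm (char_sum \<alpha> \<beta> u v))\<^sup>2)
      = (\<Sum>u\<in>UNIV. \<Sum>a\<in>UNIV. \<Sum>b\<in>UNIV. \<alpha> a * cnj (\<alpha> b) *
           (\<beta> (u * a + v * inverse a) * cnj (\<beta> (u * b + v * inverse b))))"
    unfolding of_real_sum complex_norm_square char_sum_def cnj_sum sum_product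
    by (simp add: mult_ac)
  also have "\<dots> = (\<Sum>a\<in>UNIV. \<Sum>b\<in>UNIV. \<alpha> a * cnj (\<alpha> b) *
      (\<Sum>u\<in>UNIV. \<beta> (u * a + v * inverse a) * cnj (\<beta> (u * b + v * inverse b))))"
    unfolding sum_distrib_left by (subst sum.swap) (subst (2) sum.swap, rule refl)
  also have "\<dots> = (\<Sum>a\<in>UNIV. \<Sum>b\<in>UNIV.
      of_nat CARD('a) * (if b\<^sup>2 = a\<^sup>2 then \<gamma> a * cnj (\<gamma> b) else 0) - \<gamma> a * cnj (\<gamma> b))"
    unfolding expand ..
  also have "\<dots> = of_nat CARD('a) * (\<Sum>a\<in>UNIV. \<Sum>b\<in>UNIV. if b\<^sup>2 = a\<^sup>2 then \<gamma> a * cnj (\<gamma> b) else 0)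
         - (\<Sum>a\<in>UNIV. \<gamma> a) * cnj (\<Sum>a\<in>UNIV. \<gamma> a)"
  proof -
    have "(\<Sum>a\<in>UNIV. \<Sum>b\<in>UNIV. \<gamma> a * cnj (\<gamma> b)) = (\<Sum>a\<in>UNIV. \<gamma> a) * cnj (\<Sum>a\<in>UNIV. \<gamma> a)"
      unfolding cnj_sum sum_product ..
    thus ?thesis by (simp add: sum_subtractf sum_distrib_left)
  qed
  finally show ?thesis .
qed

lemma sum_norm_char_sum_squared_le:
  fixes v :: "'a::{finite,field}"
  assumes \<alpha>: "mult_char \<alpha>" and \<beta>: "mult_char \<beta>" "nontrivial_char \<beta>" and "v \<noteq> 0"
  shows "(\<Sum>u\<in>UNIV. (norm (char_sum \<alpha> \<beta> u v))\<^sup>2) \<le> 2 * real CARD('a) * (real CARD('a) - 1)"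
proof -
  define X where "X = (\<Sum>a\<in>UNIV. \<Sum>b\<in>UNIV. if b\<^sup>2 = a\<^sup>2 then \<alpha> a * \<beta> a * cnj (\<alpha> b * \<beta> (b::'a)) else 0)"
  define G where "G = (\<Sum>a\<in>UNIV. \<alpha> a * \<beta> (a::'a))"
  have "(\<Sum>u\<in>UNIV. (norm (char_sum \<alpha> \<beta> u v))\<^sup>2) = Re (of_nat CARD('a) * X - G * cnj G)"
    unfolding X_def G_def sum_norm_char_sum_squared_eq[OF assms, symmetric] by simp
  also have "\<dots> = real CARD('a) * Re X - (norm G)\<^sup>2"
    by (simp add: complex_norm_square[symmetric] del: of_real_power)
  also have "\<dots> \<le> real CARD('a) * norm X"
  proof -
    have "real CARD('a) * Re X \<le> real CARD('a) * norm X"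
      using complex_Re_le_cmod[of X] by (rule mult_left_mono) simp
    thus ?thesis by (smt (verit) zero_le_power2)
  qed
  also have "\<dots> \<le> real CARD('a) * (2 * (real CARD('a) - 1))"
    unfolding X_def using norm_sum_equal_squares_le[OF mult_char_times[OF \<alpha> \<beta>(1)]]
    by (intro mult_left_mono) simp_all
  finally show ?thesis by (simp add: algebra_simps)
qed

lemma char_sum_scale:
  fixes u v c :: "'a::{finite,field}"
  assumes "mult_char \<alpha>" "mult_char \<beta>" "c \<noteq> 0"
  shows "char_sum \<alpha> \<beta> (u * c\<^sup>2) v = \<alpha> (inverse c) * \<beta> c * char_sum \<alpha> \<beta> u v"
proof -
  have "char_sum \<alpha> \<beta> (u * c\<^sup>2) v = (\<Sum>a\<in>UNIV. \<alpha> (a * inverse c) * \<beta> (c * (u * a + v * inverse a)))"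
    unfolding char_sum_def
  proof (rule sum.reindex_bij_witness[where j="\<lambda>a. c * a" and i="\<lambda>a. a * inverse c"])
    fix a :: 'a
    have "c * (u * (c * a) + v * inverse (c * a)) = u * c\<^sup>2 * a + v * inverse a"
      using assms(3) by (cases "a = 0") (simp_all add: field_simps power2_eq_square)
    moreover have "c * a * inverse c = a" using assms(3) by simp
    ultimately show "\<alpha> (c * a * inverse c) * \<beta> (c * (u * (c * a) + v * inverse (c * a)))
        = \<alpha> a * \<beta> (u * c\<^sup>2 * a + v * inverse a)"
      by (simp only:)
  qed (use assms(3) in simp_all)
  also have "\<dots> = \<alpha> (inverse c) * \<beta> c * char_sum \<alpha> \<beta> u v"
    unfolding char_sum_def sum_distrib_left
    by (rule sum.cong) (simp_all add: mult_charD(2)[OF assms(1)] mult_charD(2)[OF assms(2)] mult_ac)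
  finally show ?thesis .
qed

lemma card_nonzero_le_twice_card_square_class:
  assumes "(u::'a::{finite,field}) \<noteq> 0"
  shows "CARD('a) - 1 \<le> 2 * card ((\<lambda>c. u * c\<^sup>2) ` (UNIV - {0}))"
proof -
  let ?Q = "(\<lambda>c. u * c\<^sup>2) ` (UNIV - {0})" and ?fibre = "\<lambda>y. {x::'a. u * x\<^sup>2 = y}"
  have "CARD('a) - 1 = card (UNIV - {0::'a})" by (simp add: card_Diff_singleton)
  also have "\<dots> \<le> card (\<Union>y\<in>?Q. ?fibre y \<inter> (UNIV - {0}))"
    by (rule card_mono) (simp, blast)
  also have "\<dots> \<le> (\<Sum>y\<in>?Q. card (?fibre y \<inter> (UNIV - {0})))"
    by (rule card_UN_le) simp
  also have "\<dots> \<le> (\<Sum>y\<in>?Q. 2)"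
  proof (rule sum_mono)
    fix y assume "y \<in> ?Q"
    then obtain c where "y = u * c\<^sup>2" by blast
    hence "card (?fibre y \<inter> (UNIV - {0})) \<le> card {b. b\<^sup>2 = c\<^sup>2}"
      using assms by (intro card_mono) auto
    thus "card (?fibre y \<inter> (UNIV - {0})) \<le> 2" using card_square_roots_le[of c] by linarith
  qed
  finally show ?thesis by simp
qed

lemma norm_char_sum_le:
  fixes u v :: "'a::{finite,field}"
  assumes \<alpha>: "mult_char \<alpha>" and \<beta>: "mult_char \<beta>" "nontrivial_char \<beta>" and "u \<noteq> 0" "v \<noteq> 0"
  shows "norm (char_sum \<alpha> \<beta> u v) \<le> 2 * sqrt CARD('a)"
proof -
  let ?Q = "(\<lambda>c. u * c\<^sup>2) ` (UNIV - {0})"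
  have "real (CARD('a) - 1) \<le> real (2 * card ?Q)"
    using card_nonzero_le_twice_card_square_class[OF assms(4)] by (rule of_nat_mono)
  hence Q: "real CARD('a) - 1 \<le> 2 * real (card ?Q)"
    using two_le_card_field[where 'a='a] by (simp add: of_nat_diff)
  have "norm (char_sum \<alpha> \<beta> y v) = norm (char_sum \<alpha> \<beta> u v)" if "y \<in> ?Q" for y
  proof -
    obtain c where c: "c \<noteq> 0" "y = u * c\<^sup>2" using \<open>y \<in> ?Q\<close> by blast
    show ?thesis
      by (simp add: c(2) char_sum_scale[OF \<alpha> \<beta>(1) c(1)] norm_mult c(1)
          norm_mult_char[OF \<alpha>] norm_mult_char[OF \<beta>(1)])
  qed
  hence "real (card ?Q) * (norm (char_sum \<alpha> \<beta> u v))\<^sup>2 = (\<Sum>y\<in>?Q. (norm (char_sum \<alpha> \<beta> y v))\<^sup>2)"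
    by simp
  also have "\<dots> \<le> (\<Sum>y\<in>UNIV. (norm (char_sum \<alpha> \<beta> y v))\<^sup>2)"
    by (rule sum_mono2) auto
  also have "\<dots> \<le> 2 * real CARD('a) * (real CARD('a) - 1)"
    by (rule sum_norm_char_sum_squared_le[OF \<alpha> \<beta> assms(5)])
  also have "\<dots> \<le> 2 * real CARD('a) * (2 * real (card ?Q))"
    using Q by (intro mult_left_mono) simp_all
  also have "\<dots> = real (card ?Q) * (2 * sqrt CARD('a))\<^sup>2"
    by (simp add: power_mult_distrib)
  finally have "(norm (char_sum \<alpha> \<beta> u v))\<^sup>2 \<le> (2 * sqrt CARD('a))\<^sup>2"
    by (rule mult_left_le_imp_le) (use Q two_le_card_field[where 'a='a] in simp)
  thus ?thesis by (rule power2_le_imp_le) simp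
qed

lemma norm_char_sum_principal_char_le:
  fixes u v :: "'a::{finite,field}"
  assumes \<alpha>: "mult_char \<alpha>" "nontrivial_char \<alpha>" and "v \<noteq> 0"
  shows "norm (char_sum \<alpha> principal_char u v) \<le> card {x::'a. u * x\<^sup>2 + v = 0}"
proof -
  define Z where "Z = {x::'a. u * x\<^sup>2 + v = 0}"
  have Z: "a \<in> Z \<longleftrightarrow> a \<noteq> 0 \<and> u * a + v * inverse a = 0" for a
  proof -
    have "a \<in> Z \<Longrightarrow> a \<noteq> 0" using assms(3) by (auto simp: Z_def)
    moreover have "a \<noteq> 0 \<Longrightarrow> u * a\<^sup>2 + v = (u * a + v * inverse a) * a"
      by (simp add: field_simps power2_eq_square)
    ultimately show ?thesis by (auto simp: Z_def)
  qed
  have "char_sum \<alpha> principal_char u v = (\<Sum>a\<in>UNIV. \<alpha> a - (if a \<in> Z then \<alpha> a else 0))"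
    unfolding char_sum_def
    using Z mult_charD(1)[OF \<alpha>(1)] by (intro sum.cong) (auto simp: principal_char_def)
  also have "\<dots> = (\<Sum>a\<in>UNIV. \<alpha> a) - (\<Sum>a\<in>Z. \<alpha> a)"
    by (simp add: sum_subtractf sum.inter_filter[symmetric])
  finally have "norm (char_sum \<alpha> principal_char u v) = norm (\<Sum>a\<in>Z. \<alpha> a)"
    by (simp add: sum_nontrivial_char[OF \<alpha>])
  also have "\<dots> \<le> (\<Sum>a\<in>Z. 1)"
    by (intro order.trans[OF norm_sum] sum_mono norm_mult_char_le \<alpha>(1))
  finally show ?thesis by (simp add: Z_def)
qed

section \<open>Free elements and the indicator of k-freeness\<close>

lemma theta_nonneg: "0 \<le> theta k"
  by (simp add: theta_def)

lemma theta_prime: "prime r \<Longrightarrow> theta r = (real r - 1) / real r"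
  unfolding theta_def using totient_prime[of r] prime_gt_0_nat[of r] by (simp add: of_nat_diff)

lemma theta_mult: "coprime a b \<Longrightarrow> theta (a * b) = theta a * theta b"
  by (simp add: theta_def totient_mult_coprime)

lemma W_prime_mult:
  assumes "prime r" "\<not> r dvd m" "0 < m"
  shows "W (r * m) = 2 * W m"
proof -
  have "prime_factors (r * m) = insert r (prime_factors m)"
    using prime_factors_product[of r m] assms prime_prime_factors[of r] by auto
  moreover have "r \<notin> prime_factors m" using assms(2) by auto
  ultimately show ?thesis unfolding W_def by simp
qed

lemma efree_iff_not_prime_power:
  assumes "0 < e"
  shows "efree e (a::'a::field) \<longleftrightarrow> a \<noteq> 0 \<and> (\<forall>r. prime r \<and> r dvd e \<longrightarrow> \<not> (\<exists>b. a = b ^ r))"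
proof
  assume "efree e a"
  thus "a \<noteq> 0 \<and> (\<forall>r. prime r \<and> r dvd e \<longrightarrow> \<not> (\<exists>b. a = b ^ r))"
    unfolding efree_def by (metis not_prime_1)
next
  assume H: "a \<noteq> 0 \<and> (\<forall>r. prime r \<and> r dvd e \<longrightarrow> \<not> (\<exists>b. a = b ^ r))"
  have "d = 1" if "d dvd e" "a = b ^ d" for d b
  proof (rule ccontr)
    assume "d \<noteq> 1"
    then obtain r where r: "prime r" "r dvd d" using prime_factor_nat by blast
    then obtain m where "d = r * m" by blast
    hence "a = (b ^ m) ^ r" using that(2) by (simp add: power_mult[symmetric] mult.commute)
    thus False using H r dvd_trans[OF r(2) that(1)] by blast
  qed
  thus "efree e a" using H unfolding efree_def by blast
qed

lemma efree_prime_mult_iff: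
  assumes "prime r" "0 < k"
  shows "efree (r * k) (a::'a::field) \<longleftrightarrow> efree k a \<and> \<not> (\<exists>b. a = b ^ r)"
proof -
  have "prime s \<Longrightarrow> s dvd r * k \<longleftrightarrow> s = r \<or> s dvd k" for s
    using prime_dvd_mult_iff[of s r k] primes_dvd_imp_eq[of s r] assms(1) by auto
  thus ?thesis
    using assms prime_gt_0_nat[of r] by (auto simp: efree_iff_not_prime_power)
qed

definition efree_indicator :: "nat \<Rightarrow> 'a::field \<Rightarrow> complex" where
  "efree_indicator e x = (if efree e x then 1 else 0)"

lemma efree_indicator_zero [simp]: "efree_indicator e 0 = 0"
  by (simp add: efree_indicator_def efree_def)

text \<open>The p-th power test is the average of the p powers of a character of order p.\<close>

lemma efree_indicator_prime_mult:
  assumes "prime p" "p dvd CARD('a::{finite,field}) - 1" "0 < k"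
  shows "efree_indicator (p * k) (x::'a) = theta p * efree_indicator k x
           - (1 / p) * (\<Sum>t\<in>{1..<p}. efree_indicator k x * power_residue_char p x ^ t)"
proof (cases "x = 0")
  case False
  have p: "1 < p" using assms(1) prime_gt_1_nat by blast
  define S where "S = (\<Sum>t\<in>{1..<p}. power_residue_char p x ^ t)"
  have "{..<p} = insert 0 {1..<p}" using p by auto
  hence "1 + S = (if \<exists>b. x = b ^ p then of_nat p else 0)"
    using sum_power_residue_char_powers[OF assms(2) _ False] p by (simp add: S_def)
  hence "efree_indicator (p * k) x = efree_indicator k x * (1 - (1 + S) / p)"
    using p by (simp add: efree_indicator_def efree_prime_mult_iff[OF assms(1,3)])
  also have "\<dots> = theta p * efree_indicator k x - (1 / p) * (efree_indicator k x * S)"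
    using p by (simp add: theta_prime[OF assms(1)] field_simps)
  finally show ?thesis by (simp add: S_def sum_distrib_left)
qed simp

section \<open>Expansions into characters\<close>

definition char_comb :: "(complex \<times> ('a \<Rightarrow> complex)) list \<Rightarrow> 'a \<Rightarrow> complex" where
  "char_comb L x = (\<Sum>p\<leftarrow>L. fst p * snd p x)"

definition comb_weight :: "(complex \<times> ('a \<Rightarrow> complex)) list \<Rightarrow> real" where
  "comb_weight L = (\<Sum>p\<leftarrow>L. norm (fst p))"

definition twist_comb ::
  "(complex \<times> ('a \<Rightarrow> complex)) list \<Rightarrow> ('a \<Rightarrow> complex) \<Rightarrow> (complex \<times> ('a \<Rightarrow> complex)) list"
  where "twist_comb L g = map (\<lambda>p. (fst p, \<lambda>x. snd p x * g x)) L"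

definition nontrivial_expansion :: "nat \<Rightarrow> ('a::field \<Rightarrow> complex) \<Rightarrow> real \<Rightarrow> bool" where
  "nontrivial_expansion k F w \<longleftrightarrow> (\<exists>L. (\<forall>p\<in>set L. char_of_order_dvd k (snd p) \<and> nontrivial_char (snd p))
      \<and> F = char_comb L \<and> comb_weight L \<le> w)"

lemma char_comb_simps [simp]:
  "char_comb [] x = 0" "char_comb (p # L) x = fst p * snd p x + char_comb L x"
  "char_comb (L1 @ L2) x = char_comb L1 x + char_comb L2 x"
  by (simp_all add: char_comb_def)

lemma comb_weight_simps [simp]:
  "comb_weight [] = 0" "comb_weight (p # L) = norm (fst p) + comb_weight L"
  "comb_weight (L1 @ L2) = comb_weight L1 + comb_weight L2"
  by (simp_all add: comb_weight_def)

lemma comb_weight_nonneg: "0 \<le> comb_weight L"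
  by (induct L) simp_all

lemma char_comb_twist_comb [simp]: "char_comb (twist_comb L g) x = char_comb L x * g x"
  by (induct L) (simp_all add: twist_comb_def algebra_simps)

lemma comb_weight_twist_comb [simp]: "comb_weight (twist_comb L g) = comb_weight L"
  by (induct L) (simp_all add: twist_comb_def)

lemma twist_comb_nontrivial:
  assumes "\<forall>p\<in>set L. char_of_order_dvd m (snd p)" "char_of_order_dvd r \<psi>" "nontrivial_char \<psi>"
    and "coprime (t * m) r" "0 < t" "0 < m"
  shows "\<forall>p\<in>set (twist_comb L (\<lambda>x. \<psi> x ^ t)).
           char_of_order_dvd (r * m) (snd p) \<and> nontrivial_char (snd p)"
proof
  fix p assume "p \<in> set (twist_comb L (\<lambda>x. \<psi> x ^ t))"
  then obtain p0 where p0: "p0 \<in> set L" "snd p = (\<lambda>x. snd p0 x * \<psi> x ^ t)"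
    unfolding twist_comb_def by auto
  have \<phi>: "char_of_order_dvd m (snd p0)" using assms(1) p0(1) by blast
  have "mult_char (snd p)"
    using \<phi> assms(2,5) unfolding p0(2) char_of_order_dvd_def
    by (intro mult_char_times mult_char_power_fun) auto
  moreover have "(snd p0 x * \<psi> x ^ t) ^ (r * m) = 1" if "x \<noteq> 0" for x
  proof -
    have "(snd p0 x * \<psi> x ^ t) ^ (r * m) = (snd p0 x ^ m) ^ r * (\<psi> x ^ r) ^ (t * m)"
      by (simp add: power_mult_distrib power_mult[symmetric] mult_ac)
    thus ?thesis using \<phi> assms(2) that unfolding char_of_order_dvd_def by simp
  qed
  moreover have "nontrivial_char (snd p)"
    unfolding p0(2) by (rule nontrivial_char_twist[OF \<phi> assms(2-6)])
  ultimately show "char_of_order_dvd (r * m) (snd p) \<and> nontrivial_char (snd p)"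
    unfolding char_of_order_dvd_def p0(2) by simp
qed

lemma nontrivial_expansion_zero: "nontrivial_expansion k (\<lambda>x. 0) 0"
  unfolding nontrivial_expansion_def by (intro exI[of _ "[]"]) (simp add: fun_eq_iff)

lemma nontrivial_expansion_add:
  assumes "nontrivial_expansion k F w1" "nontrivial_expansion k G w2"
  shows "nontrivial_expansion k (\<lambda>x. F x + G x) (w1 + w2)"
proof -
  obtain L1 L2 where "\<forall>p\<in>set L1. char_of_order_dvd k (snd p) \<and> nontrivial_char (snd p)"
    "F = char_comb L1" "comb_weight L1 \<le> w1"
    "\<forall>p\<in>set L2. char_of_order_dvd k (snd p) \<and> nontrivial_char (snd p)"
    "G = char_comb L2" "comb_weight L2 \<le> w2"
    using assms unfolding nontrivial_expansion_def by blast
  thus ?thesis unfolding nontrivial_expansion_def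
    by (intro exI[of _ "L1 @ L2"]) (auto simp: fun_eq_iff)
qed

lemma nontrivial_expansion_sum:
  assumes "finite T" "\<And>t. t \<in> T \<Longrightarrow> nontrivial_expansion k (F t) (w t)"
  shows "nontrivial_expansion k (\<lambda>x. \<Sum>t\<in>T. F t x) (\<Sum>t\<in>T. w t)"
  using assms
proof (induct T rule: finite_induct)
  case empty thus ?case using nontrivial_expansion_zero by simp
next
  case (insert t T)
  thus ?case using nontrivial_expansion_add[of k "F t" "w t"] by simp
qed

lemma nontrivial_expansion_scale:
  assumes "nontrivial_expansion k F w"
  shows "nontrivial_expansion k (\<lambda>x. c * F x) (norm c * w)"
proof -
  obtain L where L: "\<forall>p\<in>set L. char_of_order_dvd k (snd p) \<and> nontrivial_char (snd p)"
    "F = char_comb L" "comb_weight L \<le> w"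
    using assms unfolding nontrivial_expansion_def by blast
  let ?cL = "map (\<lambda>p. (c * fst p, snd p)) L"
  have "char_comb ?cL x = c * char_comb L x" "comb_weight ?cL = norm c * comb_weight L" for x
    by (induct L) (simp_all add: algebra_simps norm_mult)
  thus ?thesis unfolding nontrivial_expansion_def using L
    by (intro exI[of _ ?cL]) (auto simp: fun_eq_iff mult_left_mono)
qed

lemma nontrivial_expansion_mono:
  assumes "nontrivial_expansion m F w" "m dvd k" "w \<le> w'"
  shows "nontrivial_expansion k F w'"
proof -
  obtain L where L: "\<forall>p\<in>set L. char_of_order_dvd m (snd p) \<and> nontrivial_char (snd p)"
    "F = char_comb L" "comb_weight L \<le> w"
    using assms(1) unfolding nontrivial_expansion_def by blast
  obtain j where "k = m * j" using assms(2) by blast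
  hence "char_of_order_dvd m \<phi> \<Longrightarrow> char_of_order_dvd k \<phi>" for \<phi> :: "'a \<Rightarrow> complex"
    by (simp add: char_of_order_dvd_def power_mult)
  thus ?thesis unfolding nontrivial_expansion_def using L assms(3)
    by (intro exI[of _ L]) auto
qed

lemma nontrivial_expansion_twist:
  assumes "\<forall>p\<in>set L. char_of_order_dvd m (snd p)" "char_of_order_dvd r \<psi>" "nontrivial_char \<psi>"
    and "coprime (t * m) r" "0 < t" "0 < m"
  shows "nontrivial_expansion (r * m) (\<lambda>x. char_comb L x * \<psi> x ^ t) (comb_weight L)"
  unfolding nontrivial_expansion_def
  using twist_comb_nontrivial[OF assms]
  by (intro exI[of _ "twist_comb L (\<lambda>x. \<psi> x ^ t)"]) (simp add: fun_eq_iff)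

lemma nontrivial_expansion_power_residue_average:
  fixes L :: "(complex \<times> ('a::{finite,field} \<Rightarrow> complex)) list"
  assumes "\<forall>p\<in>set L. char_of_order_dvd m (snd p)"
    and "prime r" "r dvd CARD('a) - 1" "\<not> r dvd m" "0 < m"
  shows "nontrivial_expansion (r * m)
           (\<lambda>x. (- 1 / of_nat r) * (\<Sum>t\<in>{1..<r}. char_comb L x * power_residue_char r x ^ t))
           (theta r * comb_weight L)"
proof -
  have r: "1 < r" using assms(2) prime_gt_1_nat by blast
  have \<psi>: "char_of_order_dvd r (power_residue_char r :: 'a \<Rightarrow> complex)"
    "nontrivial_char (power_residue_char r :: 'a \<Rightarrow> complex)"
    using char_of_order_dvd_power_residue_char[OF assms(3)] nontrivial_power_residue_char[OF assms(3,2)] r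
    by simp_all
  have "coprime (t * m) r" if "t \<in> {1..<r}" for t
    using that by (intro coprime_mult_below_prime assms(2,4)) auto
  hence "nontrivial_expansion (r * m) (\<lambda>x. \<Sum>t\<in>{1..<r}. char_comb L x * power_residue_char r x ^ t)
           (\<Sum>t\<in>{1..<r}. comb_weight L)"
    using assms(5) by (intro nontrivial_expansion_sum nontrivial_expansion_twist[OF assms(1) \<psi>]) auto
  hence "nontrivial_expansion (r * m)
      (\<lambda>x. (- 1 / of_nat r) * (\<Sum>t\<in>{1..<r}. char_comb L x * power_residue_char r x ^ t))
      (norm (- 1 / complex_of_nat r) * (\<Sum>t\<in>{1..<r}. comb_weight L))"
    by (rule nontrivial_expansion_scale)
  moreover have "norm (- 1 / complex_of_nat r) * (\<Sum>t\<in>{1..<r}. comb_weight L) = theta r * comb_weight L"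
    using r by (simp add: norm_divide of_nat_diff theta_prime[OF assms(2)] field_simps)
  ultimately show ?thesis by (simp only:)
qed

lemma efree_indicator_expansion_prime_mult:
  fixes N :: "'a::{finite,field} \<Rightarrow> complex"
  assumes "prime r" "r dvd CARD('a) - 1" "\<not> r dvd m" "0 < m"
    and fr_m: "efree_indicator m = (\<lambda>x. theta m * principal_char x + N x)"
    and N: "nontrivial_expansion m N (theta m * (real (W m) - 1))"
  shows "\<exists>N'. efree_indicator (r * m) = (\<lambda>x::'a. theta (r * m) * principal_char x + N' x)
           \<and> nontrivial_expansion (r * m) N' (theta (r * m) * (real (W (r * m)) - 1))"
proof -
  obtain L where L: "\<forall>p\<in>set L. char_of_order_dvd m (snd p) \<and> nontrivial_char (snd p)"
    "N = char_comb L" "comb_weight L \<le> theta m * (real (W m) - 1)"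
    using N unfolding nontrivial_expansion_def by blast
  define L0 where "L0 = (complex_of_real (theta m), principal_char) # L"
  have fr_L0: "efree_indicator m = char_comb L0" using fr_m L(2) by (simp add: L0_def fun_eq_iff)
  have "\<forall>p\<in>set L0. char_of_order_dvd m (snd p)"
    using L(1) by (simp add: L0_def char_of_order_dvd_principal_char)
  note avg = nontrivial_expansion_power_residue_average[OF this assms(1-4)]
  have scaled: "nontrivial_expansion (r * m) (\<lambda>x. theta r * N x) (theta r * (theta m * (real (W m) - 1)))"
    using theta_nonneg[of r]
    by (intro nontrivial_expansion_mono[OF nontrivial_expansion_scale[OF N]]) simp_all
  define N' where "N' = (\<lambda>x. theta r * N x + (- 1 / of_nat r) *
      (\<Sum>t\<in>{1..<r}. char_comb L0 x * power_residue_char r x ^ t))"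
  have exp: "nontrivial_expansion (r * m) N'
      (theta r * (theta m * (real (W m) - 1)) + theta r * comb_weight L0)"
    unfolding N'_def by (rule nontrivial_expansion_add[OF scaled avg])
  have theta_rm: "theta (r * m) = theta r * theta m"
    using assms(1,3) by (simp add: theta_mult prime_imp_coprime)
  have "theta r * comb_weight L0 \<le> theta r * (theta m * real (W m))"
    using L(3) theta_nonneg[of m] theta_nonneg[of r]
    by (intro mult_left_mono) (simp_all add: L0_def algebra_simps)
  hence "theta r * (theta m * (real (W m) - 1)) + theta r * comb_weight L0
      \<le> theta (r * m) * (real (W (r * m)) - 1)"
    unfolding theta_rm W_prime_mult[OF assms(1,3,4)] by (simp add: algebra_simps)
  moreover have "efree_indicator (r * m) x = theta (r * m) * principal_char x + N' x" for x :: 'a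
  proof -
    define S where "S = (\<Sum>t\<in>{1..<r}. char_comb L0 x * power_residue_char r x ^ t)"
    have fr_rm: "efree_indicator (r * m) x = theta r * char_comb L0 x - (1 / of_nat r) * S"
      unfolding efree_indicator_prime_mult[OF assms(1,2,4)] fr_L0 S_def ..
    have N'x: "N' x = theta r * N x + (- 1 / of_nat r) * S" unfolding N'_def S_def ..
    have L0x: "char_comb L0 x = theta m * principal_char x + N x"
      using fun_cong[OF fr_L0, of x] fun_cong[OF fr_m, of x] by simp
    show ?thesis unfolding fr_rm N'x L0x theta_rm by (simp add: algebra_simps)
  qed
  ultimately show ?thesis using nontrivial_expansion_mono[OF exp dvd_refl] by blast
qed

text \<open>Vinogradov's formula, built up one prime factor of k at a time.\<close>

lemma efree_indicator_expansion:
  assumes "squarefree k" "\<forall>r. prime r \<and> r dvd k \<longrightarrow> r dvd CARD('a::{finite,field}) - 1"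
  shows "\<exists>N. efree_indicator k = (\<lambda>x::'a. theta k * principal_char x + N x)
           \<and> nontrivial_expansion k N (theta k * (real (W k) - 1))"
  using assms
proof (induct k rule: less_induct)
  case (less k)
  show ?case
  proof (cases "k = 1")
    case True
    have "efree_indicator 1 = (\<lambda>x::'a. theta 1 * principal_char x + 0)"
      by (simp add: fun_eq_iff efree_indicator_def efree_def principal_char_def theta_def)
    thus ?thesis using True nontrivial_expansion_zero[of 1]
      by (intro exI[of _ "\<lambda>x. 0"]) (simp add: W_def)
  next
    case False
    have "k \<noteq> 0" using less.prems(1) by (rule contrapos_pn) simp
    then obtain r where r: "prime r" "r dvd k" using False prime_factor_nat by blast
    then obtain m where k: "k = r * m" by blast
    have "\<not> r dvd m"
      using less.prems(1) r k squarefreeD[of k r] by (auto simp: power2_eq_square)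
    moreover have "0 < m" "m < k" using k \<open>k \<noteq> 0\<close> prime_gt_1_nat[OF r(1)] by auto
    moreover have "squarefree m" using squarefree_mono[OF _ less.prems(1)] k by simp
    moreover have "\<forall>s. prime s \<and> s dvd m \<longrightarrow> s dvd CARD('a) - 1" using less.prems(2) k by auto
    ultimately show ?thesis
      using less.hyps efree_indicator_expansion_prime_mult[OF r(1)] less.prems(2) r unfolding k
      by blast
  qed
qed

section \<open>Counting pairs of free elements\<close>

lemma Mcount_eq_sum:
  fixes u v :: "'a::{finite,field}"
  shows "of_nat (Mcount u v e1 e2) =
    (\<Sum>a\<in>UNIV. efree_indicator e1 a * efree_indicator e2 (u * a + v * inverse a))"
proof -
  have "{a::'a. a \<noteq> 0 \<and> efree e1 a \<and> u * a + v * inverse a \<noteq> 0 \<and> efree e2 (u * a + v * inverse a)}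
      = {a \<in> UNIV. efree e1 a \<and> efree e2 (u * a + v * inverse a)}"
    unfolding efree_def by auto
  hence "of_nat (Mcount u v e1 e2) = (\<Sum>a\<in>{a \<in> UNIV. efree e1 a \<and> efree e2 (u * a + v * inverse a)}. 1)"
    unfolding Mcount_def by simp
  also have "\<dots> = (\<Sum>a\<in>UNIV. if efree e1 a \<and> efree e2 (u * a + v * inverse a) then 1 else 0)"
    by (rule sum.inter_filter) simp
  also have "\<dots> = (\<Sum>a\<in>UNIV. efree_indicator e1 a * efree_indicator e2 (u * a + v * inverse a))"
    by (rule sum.cong) (simp_all add: efree_indicator_def)
  finally show ?thesis .
qed

lemma norm_sum_char_comb_le:
  assumes "\<forall>p\<in>set L. norm (\<Sum>a\<in>A. snd p (H a) * G a) \<le> M"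
  shows "norm (\<Sum>a\<in>A. char_comb L (H a) * G a) \<le> comb_weight L * M"
  using assms
proof (induct L)
  case (Cons p L)
  have "(\<Sum>a\<in>A. char_comb (p # L) (H a) * G a)
      = fst p * (\<Sum>a\<in>A. snd p (H a) * G a) + (\<Sum>a\<in>A. char_comb L (H a) * G a)"
    by (simp add: algebra_simps sum.distrib sum_distrib_left)
  also have "norm \<dots> \<le> norm (fst p) * M + comb_weight L * M"
    using Cons by (intro order.trans[OF norm_triangle_ineq] add_mono) (auto simp: norm_mult mult_left_mono)
  finally show ?case by (simp add: algebra_simps)
qed simp

lemma norm_sum_char_comb_pair_le:
  fixes u v :: "'a::{finite,field}"
  assumes "\<forall>p\<in>set L1. \<forall>q\<in>set L2. norm (char_sum (snd p) (snd q) u v) \<le> M"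
  shows "norm (\<Sum>a\<in>UNIV. char_comb L1 a * char_comb L2 (u * a + v * inverse a))
           \<le> comb_weight L1 * (comb_weight L2 * M)"
proof (rule norm_sum_char_comb_le[where H = "\<lambda>a. a", OF ballI])
  fix p assume "p \<in> set L1"
  have "norm (\<Sum>a\<in>UNIV. char_comb L2 (u * a + v * inverse a) * snd p a) \<le> comb_weight L2 * M"
    using assms \<open>p \<in> set L1\<close>
    by (intro norm_sum_char_comb_le ballI) (simp add: char_sum_def mult.commute)
  thus "norm (\<Sum>a\<in>UNIV. snd p a * char_comb L2 (u * a + v * inverse a)) \<le> comb_weight L2 * M"
    by (simp add: mult.commute)
qed

lemma norm_sum_char_comb_nontrivial_le:
  fixes u v :: "'a::{finite,field}"
  assumes "\<forall>p\<in>set L1. mult_char (snd p)" "\<forall>q\<in>set L2. mult_char (snd q) \<and> nontrivial_char (snd q)"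
    and "u \<noteq> 0" "v \<noteq> 0"
  shows "norm (\<Sum>a\<in>UNIV. char_comb L1 a * char_comb L2 (u * a + v * inverse a))
           \<le> comb_weight L1 * (comb_weight L2 * (2 * sqrt CARD('a)))"
  by (rule norm_sum_char_comb_pair_le) (use assms in \<open>auto intro: norm_char_sum_le\<close>)

lemma norm_sum_char_comb_principal_le:
  fixes u v :: "'a::{finite,field}"
  assumes "\<forall>p\<in>set L. mult_char (snd p) \<and> nontrivial_char (snd p)" "v \<noteq> 0"
  shows "norm (\<Sum>a\<in>UNIV. char_comb L a * principal_char (u * a + v * inverse a))
           \<le> comb_weight L * card {x::'a. u * x ^ 2 + v = 0}"
proof (rule norm_sum_char_comb_le[where H = "\<lambda>a. a", OF ballI])
  fix p assume "p \<in> set L"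
  thus "norm (\<Sum>a\<in>UNIV. snd p a * principal_char (u * a + v * inverse a)) \<le> card {x::'a. u * x ^ 2 + v = 0}"
    using norm_char_sum_principal_char_le[of "snd p" v u] assms unfolding char_sum_def by blast
qed

lemma efree_indicator_twisted_char_comb:
  assumes "squarefree k" "\<forall>r. prime r \<and> r dvd k \<longrightarrow> r dvd CARD('a) - 1"
    and "prime p" "p dvd CARD('a) - 1" "\<not> p dvd k" "0 < t" "t < p"
  obtains L :: "(complex \<times> ('a::{finite,field} \<Rightarrow> complex)) list"
  where "efree_indicator k = char_comb ((complex_of_real (theta k), principal_char) # L)"
    and "\<forall>q\<in>set L. mult_char (snd q) \<and> nontrivial_char (snd q)"
    and "\<forall>q\<in>set (twist_comb ((complex_of_real (theta k), principal_char) # L)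
                          (\<lambda>x. power_residue_char p x ^ t)). mult_char (snd q) \<and> nontrivial_char (snd q)"
    and "comb_weight L \<le> theta k * (real (W k) - 1)"
    and "comb_weight ((complex_of_real (theta k), principal_char) # L) \<le> theta k * real (W k)"
proof -
  obtain N where N: "efree_indicator k = (\<lambda>x::'a. theta k * principal_char x + N x)"
    "nontrivial_expansion k N (theta k * (real (W k) - 1))"
    using efree_indicator_expansion[OF assms(1,2)] by blast
  then obtain L where L: "\<forall>q\<in>set L. char_of_order_dvd k (snd q) \<and> nontrivial_char (snd q)"
    "N = char_comb L" "comb_weight L \<le> theta k * (real (W k) - 1)"
    unfolding nontrivial_expansion_def by blast
  let ?L0 = "(complex_of_real (theta k), principal_char) # L"
  have "0 < k" using assms(1) by (rule contrapos_pp) simp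
  have "0 < p" using assms(3) prime_gt_0_nat by blast
  have L0: "\<forall>q\<in>set ?L0. char_of_order_dvd k (snd q)"
    using L(1) by (simp add: char_of_order_dvd_principal_char)
  have "\<forall>q\<in>set (twist_comb ?L0 (\<lambda>x::'a. power_residue_char p x ^ t)).
      char_of_order_dvd (p * k) (snd q) \<and> nontrivial_char (snd q)"
    by (rule twist_comb_nontrivial[OF L0 char_of_order_dvd_power_residue_char[OF assms(4) \<open>0 < p\<close>]
          nontrivial_power_residue_char[OF assms(4,3)] coprime_mult_below_prime[OF assms(3,5,6,7)]
          assms(6) \<open>0 < k\<close>])
  moreover have "comb_weight ?L0 \<le> theta k * real (W k)"
    using L(3) theta_nonneg[of k] by (simp add: algebra_simps)
  ultimately show ?thesis
    using N(1) L by (intro that[of L]) (auto simp: fun_eq_iff char_of_order_dvd_def)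
qed

lemma norm_sum_efree_twisted_left_le:
  fixes u v :: "'a::{finite,field}"
  assumes "u \<noteq> 0" "v \<noteq> 0" "squarefree k" "\<forall>r. prime r \<and> r dvd k \<longrightarrow> r dvd CARD('a) - 1"
    and "prime p" "p dvd CARD('a) - 1" "\<not> p dvd k" "0 < t" "t < p"
  shows "norm (\<Sum>a\<in>UNIV. efree_indicator k a * power_residue_char p a ^ t
                           * efree_indicator k (u * a + v * inverse a))
         \<le> theta k ^ 2 * (2 * sqrt CARD('a) * (real (W k) ^ 2 - real (W k))
                          + card {x::'a. u * x ^ 2 + v = 0} * real (W k))"
proof -
  obtain L :: "(complex \<times> ('a \<Rightarrow> complex)) list"
    where fr: "efree_indicator k = char_comb ((complex_of_real (theta k), principal_char) # L)"
      and L: "\<forall>q\<in>set L. mult_char (snd q) \<and> nontrivial_char (snd q)"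
      and T: "\<forall>q\<in>set (twist_comb ((complex_of_real (theta k), principal_char) # L)
                (\<lambda>x. power_residue_char p x ^ t)). mult_char (snd q) \<and> nontrivial_char (snd q)"
      and wL: "comb_weight L \<le> theta k * (real (W k) - 1)"
      and wL0: "comb_weight ((complex_of_real (theta k), principal_char) # L) \<le> theta k * real (W k)"
    by (rule efree_indicator_twisted_char_comb[OF assms(3-9)])
  define T where "T = twist_comb ((complex_of_real (theta k), principal_char) # L) (\<lambda>x. power_residue_char p x ^ t)"
  define Z where "Z = real (card {x::'a. u * x ^ 2 + v = 0})"
  have "(\<Sum>a\<in>UNIV. efree_indicator k a * power_residue_char p a ^ t * efree_indicator k (u * a + v * inverse a))
      = theta k * (\<Sum>a\<in>UNIV. char_comb T a * principal_char (u * a + v * inverse a))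
        + (\<Sum>a\<in>UNIV. char_comb T a * char_comb L (u * a + v * inverse a))"
    unfolding T_def fr by (simp add: algebra_simps sum.distrib sum_distrib_left)
  also have "norm \<dots> \<le> theta k * (comb_weight T * Z) + comb_weight T * (comb_weight L * (2 * sqrt CARD('a)))"
    using norm_sum_char_comb_principal_le[OF T assms(2)]
      norm_sum_char_comb_nontrivial_le[of T L, OF _ L assms(1,2)] T theta_nonneg[of k]
    unfolding T_def Z_def
    by (intro order.trans[OF norm_triangle_ineq add_mono]) (auto simp: norm_mult mult_left_mono)
  also have "\<dots> \<le> theta k * (theta k * real (W k) * Z)
                 + theta k * real (W k) * (theta k * (real (W k) - 1) * (2 * sqrt CARD('a)))"
    using wL0 wL theta_nonneg[of k] comb_weight_nonneg[of T] comb_weight_nonneg[of L]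
    by (intro add_mono mult_left_mono mult_right_mono mult_mono) (simp_all add: T_def Z_def)
  also have "\<dots> = theta k ^ 2 * (2 * sqrt CARD('a) * (real (W k) ^ 2 - real (W k)) + Z * real (W k))"
    by (simp add: power2_eq_square algebra_simps)
  finally show ?thesis unfolding Z_def .
qed

lemma norm_sum_efree_twisted_right_le:
  fixes u v :: "'a::{finite,field}"
  assumes "u \<noteq> 0" "v \<noteq> 0" "squarefree k" "\<forall>r. prime r \<and> r dvd k \<longrightarrow> r dvd CARD('a) - 1"
    and "prime p" "p dvd CARD('a) - 1" "\<not> p dvd k" "0 < t" "t < p"
  shows "norm (\<Sum>a\<in>UNIV. efree_indicator k a * (efree_indicator k (u * a + v * inverse a)
                           * power_residue_char p (u * a + v * inverse a) ^ t))
         \<le> 2 * theta k ^ 2 * real (W k) ^ 2 * sqrt CARD('a)"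
proof -
  obtain L :: "(complex \<times> ('a \<Rightarrow> complex)) list"
    where fr: "efree_indicator k = char_comb ((complex_of_real (theta k), principal_char) # L)"
      and L: "\<forall>q\<in>set L. mult_char (snd q) \<and> nontrivial_char (snd q)"
      and T: "\<forall>q\<in>set (twist_comb ((complex_of_real (theta k), principal_char) # L)
                (\<lambda>x. power_residue_char p x ^ t)). mult_char (snd q) \<and> nontrivial_char (snd q)"
      and "comb_weight L \<le> theta k * (real (W k) - 1)"
      and wL0: "comb_weight ((complex_of_real (theta k), principal_char) # L) \<le> theta k * real (W k)"
    by (rule efree_indicator_twisted_char_comb[OF assms(3-9)])
  define L0 where "L0 = (complex_of_real (theta k), principal_char) # L"
  define T where "T = twist_comb L0 (\<lambda>x. power_residue_char p x ^ t)"
  have "(\<Sum>a\<in>UNIV. efree_indicator k a * (efree_indicator k (u * a + v * inverse a)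
                           * power_residue_char p (u * a + v * inverse a) ^ t))
      = (\<Sum>a\<in>UNIV. char_comb L0 a * char_comb T (u * a + v * inverse a))"
    unfolding T_def fr L0_def by simp
  also have "norm \<dots> \<le> comb_weight L0 * (comb_weight T * (2 * sqrt CARD('a)))"
    using L T assms(1,2) unfolding L0_def T_def
    by (intro norm_sum_char_comb_nontrivial_le) (auto simp: mult_char_principal_char)
  also have "\<dots> \<le> theta k * real (W k) * (theta k * real (W k) * (2 * sqrt CARD('a)))"
    using wL0 comb_weight_nonneg[of L0] theta_nonneg[of k]
    by (intro mult_mono mult_right_mono) (simp_all add: L0_def T_def)
  also have "\<dots> = 2 * theta k ^ 2 * real (W k) ^ 2 * sqrt CARD('a)"
    by (simp add: power2_eq_square algebra_simps)
  finally show ?thesis .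
qed

lemma Mcount_prime_mult_left_eq:
  fixes u v :: "'a::{finite,field}"
  assumes "prime p" "p dvd CARD('a) - 1" "0 < k"
  shows "complex_of_nat (Mcount u v (p * k) k) - complex_of_real (theta p) * of_nat (Mcount u v k k)
       = - (1 / of_nat p) * (\<Sum>t\<in>{1..<p}. \<Sum>a\<in>UNIV. efree_indicator k a * power_residue_char p a ^ t
                                                * efree_indicator k (u * a + v * inverse a))"
  unfolding Mcount_eq_sum efree_indicator_prime_mult[OF assms]
  by (subst sum.swap) (simp add: algebra_simps sum_subtractf sum_distrib_left sum_distrib_right sum_negf)

lemma Mcount_prime_mult_right_eq:
  fixes u v :: "'a::{finite,field}"
  assumes "prime p" "p dvd CARD('a) - 1" "0 < k"
  shows "complex_of_nat (Mcount u v k (p * k)) - complex_of_real (theta p) * of_nat (Mcount u v k k)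
       = - (1 / of_nat p) * (\<Sum>t\<in>{1..<p}. \<Sum>a\<in>UNIV. efree_indicator k a
            * (efree_indicator k (u * a + v * inverse a) * power_residue_char p (u * a + v * inverse a) ^ t))"
  unfolding Mcount_eq_sum efree_indicator_prime_mult[OF assms]
  by (subst sum.swap) (simp add: algebra_simps sum_subtractf sum_distrib_left sum_distrib_right sum_negf)

lemma norm_average_nontrivial_powers_le:
  assumes "\<And>t. t \<in> {1..<p} \<Longrightarrow> norm (z t :: complex) \<le> M" "0 < p"
  shows "norm (- (1 / of_nat p) * (\<Sum>t\<in>{1..<p}. z t)) \<le> (1 - 1 / p) * M"
proof -
  have "norm (- (1 / of_nat p) * (\<Sum>t\<in>{1..<p}. z t)) \<le> 1 / p * (\<Sum>t\<in>{1..<p}. M)"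
    unfolding norm_mult norm_minus_cancel
    by (intro mult_mono order.trans[OF norm_sum sum_mono] assms) (simp_all add: norm_divide)
  also have "\<dots> = (1 - 1 / p) * M" using assms(2) by (simp add: of_nat_diff field_simps)
  finally show ?thesis .
qed

lemma abs_of_nat_diff_eq_norm:
  "\<bar>real m - c * real n\<bar> = norm (complex_of_nat m - complex_of_real c * of_nat n)"
  by (metis norm_of_real of_real_diff of_real_mult of_real_of_nat_eq)

lemma Mcount_prime_mult_left_bound:
  fixes u v :: "'a::{finite,field}"
  assumes "u \<noteq> 0" "v \<noteq> 0" "squarefree k" "\<forall>r. prime r \<and> r dvd k \<longrightarrow> r dvd CARD('a) - 1"
    and "prime p" "p dvd CARD('a) - 1" "\<not> p dvd k"
  shows "\<bar>real (Mcount u v (p * k) k) - theta p * real (Mcount u v k k)\<bar>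
           \<le> theta k ^ 2 * (1 - 1 / real p) *
             (2 * sqrt (real CARD('a)) * (real (W k) ^ 2 - real (W k))
              + real (card {x::'a. u * x ^ 2 + v = 0}) * real (W k))"
proof -
  have "0 < k" using assms(3) by (rule contrapos_pp) simp
  hence "\<bar>real (Mcount u v (p * k) k) - theta p * real (Mcount u v k k)\<bar>
      \<le> (1 - 1 / real p) * (theta k ^ 2 * (2 * sqrt (real CARD('a)) * (real (W k) ^ 2 - real (W k))
                                        + real (card {x::'a. u * x ^ 2 + v = 0}) * real (W k)))"
    unfolding abs_of_nat_diff_eq_norm Mcount_prime_mult_left_eq[OF assms(5,6) \<open>0 < k\<close>]
    using norm_sum_efree_twisted_left_le[OF assms] prime_gt_0_nat[OF assms(5)]
    by (intro norm_average_nontrivial_powers_le) auto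
  thus ?thesis by (simp add: mult_ac)
qed

lemma Mcount_prime_mult_right_bound:
  fixes u v :: "'a::{finite,field}"
  assumes "u \<noteq> 0" "v \<noteq> 0" "squarefree k" "\<forall>r. prime r \<and> r dvd k \<longrightarrow> r dvd CARD('a) - 1"
    and "prime p" "p dvd CARD('a) - 1" "\<not> p dvd k"
  shows "\<bar>real (Mcount u v k (p * k)) - theta p * real (Mcount u v k k)\<bar>
           \<le> 2 * (1 - 1 / real p) * theta k ^ 2 * real (W k) ^ 2 * sqrt (real CARD('a))"
proof -
  have "0 < k" using assms(3) by (rule contrapos_pp) simp
  hence "\<bar>real (Mcount u v k (p * k)) - theta p * real (Mcount u v k k)\<bar>
      \<le> (1 - 1 / real p) * (2 * theta k ^ 2 * real (W k) ^ 2 * sqrt CARD('a))"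
    unfolding abs_of_nat_diff_eq_norm Mcount_prime_mult_right_eq[OF assms(5,6) \<open>0 < k\<close>]
    using norm_sum_efree_twisted_right_le[OF assms] prime_gt_0_nat[OF assms(5)]
    by (intro norm_average_nontrivial_powers_le) auto
  thus ?thesis by (simp add: algebra_simps)
qed

lemma squarefree_Rad: "squarefree (Rad n)"
  unfolding Rad_def
  by (rule squarefree_prod_coprime)
     (auto intro: primes_coprime squarefree_prime dest: in_prime_factors_imp_prime)

lemma prime_dvd_Rad_imp_dvd:
  assumes "prime r" "r dvd Rad n"
  shows "r dvd n"
proof -
  obtain s where "s \<in> prime_factors n" "r dvd s"
    using assms unfolding Rad_def by (auto simp: prime_dvd_prod_iff)
  thus ?thesis using assms(1) primes_dvd_imp_eq[of r s] by auto
qed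

lemma prime_factor_of_Rad_split:
  assumes "Rad n = k * prod_list ps" "\<forall>q\<in>set ps. prime q" "p \<in> set ps"
  shows "squarefree k" "\<forall>r. prime r \<and> r dvd k \<longrightarrow> r dvd n" "prime p" "p dvd n" "\<not> p dvd k"
proof -
  have sq: "squarefree (k * prod_list ps)" using squarefree_Rad assms(1) by metis
  show "squarefree k" using squarefree_multD(1)[OF sq] .
  show "\<forall>r. prime r \<and> r dvd k \<longrightarrow> r dvd n"
    using prime_dvd_Rad_imp_dvd assms(1) by (metis dvd_mult2)
  show p: "prime p" using assms(2,3) by blast
  have "p dvd prod_list ps" using assms(3) by (rule prod_list_dvd)
  thus "p dvd n" using prime_dvd_Rad_imp_dvd[OF p] assms(1) by (metis dvd_mult)
  show "\<not> p dvd k"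
  proof
    assume "p dvd k"
    hence "p ^ 2 dvd k * prod_list ps"
      using \<open>p dvd prod_list ps\<close> by (simp add: power2_eq_square mult_dvd_mono)
    thus False using squarefreeD[OF sq] p by (metis not_prime_unit)
  qed
qed

theorem lemma6p3:
  fixes u v :: "'a::{finite,field}"
    and k :: nat and ps :: "nat list" and i :: nat
  assumes "u \<noteq> 0" and "v \<noteq> 0"
    and "distinct ps" and "\<forall>p\<in>set ps. prime p"
    and "Rad (card (UNIV::'a set) - 1) = k * prod_list ps"
    and "i < length ps"
  shows "(\<bar>real (Mcount u v (ps ! i * k) k) - theta (ps ! i) * real (Mcount u v k k)\<bar>
           \<le> theta k ^ 2 * (1 - 1 / real (ps ! i)) *
             (2 * sqrt (real (card (UNIV::'a set))) * (real (W k) ^ 2 - real (W k))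
              + real (card {x::'a. u * x ^ 2 + v = 0}) * real (W k))) \<and>
         (\<bar>real (Mcount u v k (ps ! i * k)) - theta (ps ! i) * real (Mcount u v k k)\<bar>
           \<le> 2 * (1 - 1 / real (ps ! i)) * theta k ^ 2 * real (W k) ^ 2 * sqrt (real (card (UNIV::'a set))))"
proof -
  have "ps ! i \<in> set ps" using assms(6) by simp
  note facts = prime_factor_of_Rad_split[OF assms(5,4) this]
  show ?thesis
    using Mcount_prime_mult_left_bound[OF assms(1,2) facts(1,2,3,4,5)]
      Mcount_prime_mult_right_bound[OF assms(1,2) facts(1,2,3,4,5)]
    by blast
qed

end
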